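(* Let $G=(V,E)$ be a graph with square $G^2=(V,E^2)$, and let $\sigma=(v_1,\ldots,v_n)$ be a maximum neighborhood ordering of $G$ such that for all $1\le i<n$, $m_i$ is a maximum neighbor of $v_i$ in $G_{\sigma,i}$ with $v_i\neq m_i$. If $1\le i<j\le n$ and $m_i\neq v_j$, then $v_iv_j\in E^2$ if and only if $m_iv_j\in E$.
   Context: All graphs are finite, simple and undirected; $N[v]$ denotes the closed neighborhood of $v$. The square $G^2=(V,E^2)$ has distinct $u,v$ adjacent iff $uv\in E$ or $u,v$ have a common neighbor in $G$. For a total ordering $\sigma=(v_1,\ldots,v_n)$ of $V$, $G_{\sigma,i}$ is the subgraph of $G$ induced by $\{v_i,\ldots,v_n\}$. In a graph $H$, a vertex $u\in N_H[v]$ is a maximum neighbor of $v$ if $N_H[x]\subseteq N_H[u]$ for all $x\in N_H[v]$. An ordering $\sigma$ is a maximum neighborhood ordering of $G$ if for every $i$, $v_i$ has a maximum neighbor in $G_{\sigma,i}$. *)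

theory Defs
  imports Main
begin

definition graph :: "'a set \<Rightarrow> ('a \<Rightarrow> 'a \<Rightarrow> bool) \<Rightarrow> bool" where
  "graph V E \<longleftrightarrow> finite V \<and> (\<forall>u v. E u v \<longrightarrow> u \<in> V \<and> v \<in> V)
     \<and> (\<forall>u v. E u v \<longrightarrow> E v u) \<and> (\<forall>v. \<not> E v v)"

definition cnbh :: "'a set \<Rightarrow> ('a \<Rightarrow> 'a \<Rightarrow> bool) \<Rightarrow> 'a \<Rightarrow> 'a set" where
  "cnbh S E v = {u \<in> S. u = v \<or> E v u}"

definition max_neighbor :: "'a set \<Rightarrow> ('a \<Rightarrow> 'a \<Rightarrow> bool) \<Rightarrow> 'a \<Rightarrow> 'a \<Rightarrow> bool" where
  "max_neighbor S E v u \<longleftrightarrow> u \<in> cnbh S E v \<and> (\<forall>x \<in> cnbh S E v. cnbh S E x \<subseteq> cnbh S E u)"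

text \<open>Vertex set of G_{sigma,i}; indices are 0-based (list index i = paper index i+1).\<close>
definition Gsigma :: "'a list \<Rightarrow> nat \<Rightarrow> 'a set" where
  "Gsigma \<sigma> i = set (drop i \<sigma>)"

definition max_nbh_ordering :: "'a set \<Rightarrow> ('a \<Rightarrow> 'a \<Rightarrow> bool) \<Rightarrow> 'a list \<Rightarrow> bool" where
  "max_nbh_ordering V E \<sigma> \<longleftrightarrow> distinct \<sigma> \<and> set \<sigma> = V \<and>
     (\<forall>i < length \<sigma>. \<exists>u. max_neighbor (Gsigma \<sigma> i) E (\<sigma> ! i) u)"

definition sq_adj :: "('a \<Rightarrow> 'a \<Rightarrow> bool) \<Rightarrow> 'a \<Rightarrow> 'a \<Rightarrow> bool" where
  "sq_adj E u v \<longleftrightarrow> u \<noteq> v \<and> (E u v \<or> (\<exists>w. E u w \<and> E w v))"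

end

theory Submission
  imports Defs
begin

text \<open>If a and b lie in G_{sigma,i} and have a common neighbour v_k with k < i, then both
  lie in the closed neighbourhood of v_k in G_{sigma,k}, hence in that of its maximum
  neighbour m_k \<noteq> v_k. So either m_k is a or b, and a, b are adjacent, or m_k is a common
  neighbour strictly later in sigma. Pushing the common neighbour forward, a and b are
  adjacent or have a common neighbour inside G_{sigma,i}. There the closed neighbourhood of
  m_i contains that of every vertex of N[v_i], so v_j is within distance two of v_i
  exactly when it is in N[m_i].\<close>

lemma Gsigma_antimono: "k \<le> i \<Longrightarrow> Gsigma \<sigma> i \<subseteq> Gsigma \<sigma> k"
  unfolding Gsigma_def by (rule set_drop_subset_set_drop)

lemma nth_in_Gsigma:
  assumes "k \<le> j" "j < length \<sigma>"
  shows "\<sigma> ! j \<in> Gsigma \<sigma> k"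
proof -
  have "drop k \<sigma> ! (j - k) = \<sigma> ! j" "j - k < length (drop k \<sigma>)"
    using assms by simp_all
  then show ?thesis unfolding Gsigma_def by (metis nth_mem)
qed

lemma in_Gsigma_obtain_index:
  assumes "u \<in> Gsigma \<sigma> k"
  obtains j where "k \<le> j" "j < length \<sigma>" "u = \<sigma> ! j"
proof -
  from assms obtain t where "t < length (drop k \<sigma>)" "u = drop k \<sigma> ! t"
    unfolding Gsigma_def by (auto simp: in_set_conv_nth)
  then show ?thesis by (intro that[of "k + t"]) auto
qed

lemma max_neighbor_dominates:
  assumes "max_neighbor S E v u" "x \<in> cnbh S E v" "y \<in> cnbh S E x"
  shows "y \<in> cnbh S E u"
  using assms unfolding max_neighbor_def by blast

lemma common_neighbor_in_Gsigma:
  assumes sym: "symp E"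
    and max_nb: "\<And>k. k + 1 < length \<sigma> \<Longrightarrow>
                   max_neighbor (Gsigma \<sigma> k) E (\<sigma> ! k) (m k) \<and> \<sigma> ! k \<noteq> m k"
    and a: "a \<in> Gsigma \<sigma> i" and b: "b \<in> Gsigma \<sigma> i" and "a \<noteq> b"
  shows "k < length \<sigma> \<Longrightarrow> E a (\<sigma> ! k) \<Longrightarrow> E (\<sigma> ! k) b \<Longrightarrow>
           E a b \<or> (\<exists>w \<in> Gsigma \<sigma> i. E a w \<and> E w b)"
proof (induction "i - k" arbitrary: k rule: less_induct)
  case less
  show ?case
  proof (cases "i \<le> k")
    case True
    then show ?thesis using less.prems nth_in_Gsigma by blast
  next
    case False
    have "i < length \<sigma>"
      using a by (auto elim: in_Gsigma_obtain_index)
    with False have mk: "max_neighbor (Gsigma \<sigma> k) E (\<sigma> ! k) (m k)" "\<sigma> ! k \<noteq> m k"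
      using max_nb by auto
    have ab_k: "a \<in> Gsigma \<sigma> k" "b \<in> Gsigma \<sigma> k"
      using a b Gsigma_antimono[of k i \<sigma>] False by auto
    have "a \<in> cnbh (Gsigma \<sigma> k) E (\<sigma> ! k)" "b \<in> cnbh (Gsigma \<sigma> k) E (\<sigma> ! k)"
      using ab_k less.prems sym unfolding cnbh_def by (auto dest: sympD)
    then have a_m: "a \<in> cnbh (Gsigma \<sigma> k) E (m k)" and b_m: "b \<in> cnbh (Gsigma \<sigma> k) E (m k)"
      using max_neighbor_dominates[OF mk(1)] ab_k unfolding cnbh_def by blast+
    show ?thesis
    proof (cases "m k = a \<or> m k = b")
      case True
      then show ?thesis using a_m b_m \<open>a \<noteq> b\<close> sym unfolding cnbh_def by (auto dest: sympD)
    next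
      case False
      have "E a (m k)" "E (m k) b"
        using a_m b_m False sym unfolding cnbh_def by (auto dest: sympD)
      moreover obtain k' where "k \<le> k'" "k' < length \<sigma>" "m k = \<sigma> ! k'"
        using mk(1) unfolding max_neighbor_def cnbh_def by (auto elim: in_Gsigma_obtain_index)
      moreover have "k' \<noteq> k" using mk(2) \<open>m k = \<sigma> ! k'\<close> by auto
      ultimately show ?thesis using less.hyps[of k'] \<open>\<not> i \<le> k\<close> by auto
    qed
  qed
qed

lemma sq_adj_witness_in_Gsigma:
  assumes G: "graph (set \<sigma>) E"
    and max_nb: "\<And>k. k + 1 < length \<sigma> \<Longrightarrow>
                   max_neighbor (Gsigma \<sigma> k) E (\<sigma> ! k) (m k) \<and> \<sigma> ! k \<noteq> m k"
    and a: "a \<in> Gsigma \<sigma> i" and b: "b \<in> Gsigma \<sigma> i" and "sq_adj E a b"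
  shows "\<exists>x \<in> cnbh (Gsigma \<sigma> i) E a. b \<in> cnbh (Gsigma \<sigma> i) E x"
proof -
  have sym: "symp E" using G unfolding graph_def by (auto intro: sympI)
  have "a \<noteq> b" "E a b \<or> (\<exists>w. E a w \<and> E w b)"
    using \<open>sq_adj E a b\<close> unfolding sq_adj_def by auto
  moreover have "E a b \<or> (\<exists>w \<in> Gsigma \<sigma> i. E a w \<and> E w b)" if "E a w" "E w b" for w
  proof -
    obtain k where "k < length \<sigma>" "w = \<sigma> ! k"
      using \<open>E a w\<close> G unfolding graph_def by (auto simp: in_set_conv_nth)
    then show ?thesis
      using common_neighbor_in_Gsigma[OF sym max_nb a b \<open>a \<noteq> b\<close>] that by blast
  qed
  ultimately have "E a b \<or> (\<exists>w \<in> Gsigma \<sigma> i. E a w \<and> E w b)" by blast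
  then show ?thesis using a b unfolding cnbh_def by auto
qed

theorem lemma7:
  fixes V :: "'a set" and E :: "'a \<Rightarrow> 'a \<Rightarrow> bool" and \<sigma> :: "'a list" and m :: "nat \<Rightarrow> 'a"
  assumes "graph V E"
    and "max_nbh_ordering V E \<sigma>"
    and "\<forall>k. k + 1 < length \<sigma> \<longrightarrow> max_neighbor (Gsigma \<sigma> k) E (\<sigma> ! k) (m k) \<and> \<sigma> ! k \<noteq> m k"
    and "i < j" and "j < length \<sigma>"
    and "m i \<noteq> \<sigma> ! j"
  shows "sq_adj E (\<sigma> ! i) (\<sigma> ! j) \<longleftrightarrow> E (m i) (\<sigma> ! j)"
proof -
  have G: "graph (set \<sigma>) E" and "distinct \<sigma>"
    using assms(1,2) unfolding max_nbh_ordering_def by auto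
  have vi: "\<sigma> ! i \<in> Gsigma \<sigma> i" and vj: "\<sigma> ! j \<in> Gsigma \<sigma> i"
    using assms(4,5) by (auto intro: nth_in_Gsigma)
  have mi: "max_neighbor (Gsigma \<sigma> i) E (\<sigma> ! i) (m i)" "\<sigma> ! i \<noteq> m i"
    using assms(3-5) by auto
  show ?thesis
  proof
    assume "sq_adj E (\<sigma> ! i) (\<sigma> ! j)"
    then obtain x where "x \<in> cnbh (Gsigma \<sigma> i) E (\<sigma> ! i)" "\<sigma> ! j \<in> cnbh (Gsigma \<sigma> i) E x"
      using sq_adj_witness_in_Gsigma[OF G _ vi vj] assms(3) by blast
    then have "\<sigma> ! j \<in> cnbh (Gsigma \<sigma> i) E (m i)"
      using max_neighbor_dominates[OF mi(1)] by blast
    then show "E (m i) (\<sigma> ! j)" using assms(6) unfolding cnbh_def by auto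
  next
    assume "E (m i) (\<sigma> ! j)"
    moreover have "E (\<sigma> ! i) (m i)" using mi unfolding max_neighbor_def cnbh_def by auto
    moreover have "\<sigma> ! i \<noteq> \<sigma> ! j"
      using \<open>distinct \<sigma>\<close> assms(4,5) by (simp add: nth_eq_iff_index_eq)
    ultimately show "sq_adj E (\<sigma> ! i) (\<sigma> ! j)" unfolding sq_adj_def by auto
  qed
qed

end
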